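(* Let $\mathcal{U}\subseteq\mathbb{R}^n$ be a domain and $F=u\,\phi(r,s)$ a spherically symmetric Finsler metric on $\mathcal{U}$, where $u=|y|$, $r=|x|$, $s=\langle x,y\rangle/|y|$ and $\phi$ is smooth. Write the geodesic spray coefficients of $F$ as $G^i=uP\,y^i+u^2Q\,x^i$ with $P=P(r,s)$, $Q=Q(r,s)$, and put $$L_1=3\phi_sP_{ss}+\phi P_{sss}+\big(s\phi+(r^2-s^2)\phi_s\big)Q_{sss},$$ $$L_2=-s\phi P_{ss}+\phi_s(P-sP_s)+\big(s\phi+(r^2-s^2)\phi_s\big)(Q_s-sQ_{ss}).$$ Then the mean Landsberg curvature of $F$ is $$J_i=H\Big(x^i-s\frac{y^i}{u}\Big),\qquad H=-\frac{(r^2-s^2)(\phi-s\phi_s)L_1+\big[(n+1)(\phi-s\phi_s)+(n-2)(r^2-s^2)\phi_{ss}\big]L_2}{2(\phi-s\phi_s)\big[\phi-s\phi_s+(r^2-s^2)\phi_{ss}\big]}.$$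
   Context: Here $|\cdot|$, $\langle\cdot,\cdot\rangle$ are the Euclidean norm and inner product; subscripts $s$ denote partial derivatives in $s$. For a Finsler metric $F$ with fundamental tensor $g_{ij}=\tfrac12(F^2)_{y^iy^j}$ and inverse $(g^{ij})$, the spray coefficients are $G^i=\tfrac14 g^{il}\{(F^2)_{x^ky^l}y^k-(F^2)_{x^l}\}$; the Landsberg curvature is $L_{ijk}=-\tfrac12 F F_{y^l}\,\partial^3G^l/\partial y^i\partial y^j\partial y^k$, and the mean Landsberg curvature is $J_i=g^{jk}L_{ijk}$. *)

theory Defs
  imports "HOL-Analysis.Analysis"
begin

definition pdir :: "('a::real_normed_vector \<Rightarrow> real) \<Rightarrow> 'a \<Rightarrow> 'a \<Rightarrow> real" where
  "pdir f w v = deriv (\<lambda>t. f (v + t *\<^sub>R w)) 0"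

fun pds :: "('a::real_normed_vector \<Rightarrow> real) \<Rightarrow> 'a list \<Rightarrow> 'a \<Rightarrow> real" where
  "pds f [] = f"
| "pds f (w # ws) = pdir (pds f ws) w"

definition smooth_on :: "'a::euclidean_space set \<Rightarrow> ('a \<Rightarrow> real) \<Rightarrow> bool" where
  "smooth_on S f \<longleftrightarrow> open S \<and> (\<forall>ws. set ws \<subseteq> Basis \<longrightarrow> pds f ws differentiable_on S)"

definition pd :: "(real^'n \<Rightarrow> real) \<Rightarrow> 'n \<Rightarrow> real^'n \<Rightarrow> real" where
  "pd f i v = pdir f (axis i 1) v"

definition ds :: "(real \<Rightarrow> real \<Rightarrow> real) \<Rightarrow> real \<Rightarrow> real \<Rightarrow> real" where
  "ds f r s = deriv (\<lambda>t. f r t) s"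

definition fund_tensor :: "(real^'n \<Rightarrow> real^'n \<Rightarrow> real) \<Rightarrow> real^'n \<Rightarrow> real^'n \<Rightarrow> 'n \<Rightarrow> 'n \<Rightarrow> real" where
  "fund_tensor F x y i j = 1/2 * pd (\<lambda>y'. pd (\<lambda>y''. (F x y'')^2) j y') i y"

definition gmat :: "(real^'n \<Rightarrow> real^'n \<Rightarrow> real) \<Rightarrow> real^'n \<Rightarrow> real^'n \<Rightarrow> real^'n^'n" where
  "gmat F x y = (\<chi> i j. fund_tensor F x y i j)"

definition ginv :: "(real^'n \<Rightarrow> real^'n \<Rightarrow> real) \<Rightarrow> real^'n \<Rightarrow> real^'n \<Rightarrow> 'n \<Rightarrow> 'n \<Rightarrow> real" where
  "ginv F x y i j = matrix_inv (gmat F x y) $ i $ j"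

definition finsler_metric :: "(real^'n) set \<Rightarrow> (real^'n \<Rightarrow> real^'n \<Rightarrow> real) \<Rightarrow> bool" where
  "finsler_metric U F \<longleftrightarrow>
     open U \<and>
     smooth_on (U \<times> (UNIV - {0})) (\<lambda>(x, y). F x y) \<and>
     (\<forall>x\<in>U. \<forall>y. y \<noteq> 0 \<longrightarrow> F x y > 0) \<and>
     (\<forall>x\<in>U. \<forall>y. \<forall>c::real. c > 0 \<longrightarrow> F x (c *\<^sub>R y) = c * F x y) \<and>
     (\<forall>x\<in>U. \<forall>y. y \<noteq> 0 \<longrightarrow>
        (\<forall>v. v \<noteq> 0 \<longrightarrow> (\<Sum>i\<in>UNIV. \<Sum>j\<in>UNIV. fund_tensor F x y i j * v$i * v$j) > 0))"

definition spray :: "(real^'n \<Rightarrow> real^'n \<Rightarrow> real) \<Rightarrow> real^'n \<Rightarrow> real^'n \<Rightarrow> 'n \<Rightarrow> real" where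
  "spray F x y i = 1/4 * (\<Sum>l\<in>UNIV. ginv F x y i l *
      ((\<Sum>k\<in>UNIV. pd (\<lambda>y'. pd (\<lambda>x'. (F x' y')^2) k x) l y * y$k)
        - pd (\<lambda>x'. (F x' y)^2) l x))"

definition landsberg :: "(real^'n \<Rightarrow> real^'n \<Rightarrow> real) \<Rightarrow> real^'n \<Rightarrow> real^'n \<Rightarrow> 'n \<Rightarrow> 'n \<Rightarrow> 'n \<Rightarrow> real" where
  "landsberg F x y i j k = - 1/2 * F x y * (\<Sum>l\<in>UNIV. pd (\<lambda>y'. F x y') l y *
      pd (\<lambda>y1. pd (\<lambda>y2. pd (\<lambda>y3. spray F x y3 l) k y2) j y1) i y)"

definition mean_landsberg :: "(real^'n \<Rightarrow> real^'n \<Rightarrow> real) \<Rightarrow> real^'n \<Rightarrow> real^'n \<Rightarrow> 'n \<Rightarrow> real" where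
  "mean_landsberg F x y i = (\<Sum>j\<in>UNIV. \<Sum>k\<in>UNIV. ginv F x y j k * landsberg F x y i j k)"

definition sph_metric :: "(real \<Rightarrow> real \<Rightarrow> real) \<Rightarrow> real^'n \<Rightarrow> real^'n \<Rightarrow> real" where
  "sph_metric \<phi> x y = norm y * \<phi> (norm x) ((x \<bullet> y) / norm y)"

definition L1 :: "(real \<Rightarrow> real \<Rightarrow> real) \<Rightarrow> (real \<Rightarrow> real \<Rightarrow> real) \<Rightarrow> (real \<Rightarrow> real \<Rightarrow> real)
                  \<Rightarrow> real \<Rightarrow> real \<Rightarrow> real" where
  "L1 \<phi> P Q r s = 3 * ds \<phi> r s * ds (ds P) r s + \<phi> r s * ds (ds (ds P)) r s
      + (s * \<phi> r s + (r^2 - s^2) * ds \<phi> r s) * ds (ds (ds Q)) r s"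

definition L2 :: "(real \<Rightarrow> real \<Rightarrow> real) \<Rightarrow> (real \<Rightarrow> real \<Rightarrow> real) \<Rightarrow> (real \<Rightarrow> real \<Rightarrow> real)
                  \<Rightarrow> real \<Rightarrow> real \<Rightarrow> real" where
  "L2 \<phi> P Q r s = - s * \<phi> r s * ds (ds P) r s + ds \<phi> r s * (P r s - s * ds P r s)
      + (s * \<phi> r s + (r^2 - s^2) * ds \<phi> r s) * (ds Q r s - s * ds (ds Q) r s)"

definition Hcoef :: "nat \<Rightarrow> (real \<Rightarrow> real \<Rightarrow> real) \<Rightarrow> (real \<Rightarrow> real \<Rightarrow> real) \<Rightarrow> (real \<Rightarrow> real \<Rightarrow> real)
                  \<Rightarrow> real \<Rightarrow> real \<Rightarrow> real" where
  "Hcoef n \<phi> P Q r s =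
     - ((r^2 - s^2) * (\<phi> r s - s * ds \<phi> r s) * L1 \<phi> P Q r s
        + ((real n + 1) * (\<phi> r s - s * ds \<phi> r s) + (real n - 2) * (r^2 - s^2) * ds (ds \<phi>) r s)
          * L2 \<phi> P Q r s)
     / (2 * (\<phi> r s - s * ds \<phi> r s) * (\<phi> r s - s * ds \<phi> r s + (r^2 - s^2) * ds (ds \<phi>) r s))"

end

theory Submission
  imports Defs
begin

(* Write s = <x,y>/|y|, yhat = y/|y| and xhor = x - s yhat, the part of x orthogonal to y.
   Every y-derivative of a function |y|^m f(s) is a polynomial in <yhat,.>, <xhor,.> and the
   angular form <.,.> - <yhat,.><yhat,.>, with coefficients built from f and its s-derivatives.
   So the spray G = |y| P y + |y|^2 Q x and F = |y| phi can be differentiated in closed form: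
   G''' is A''' y + A''(v,w) t + A''(t,w) v + A''(t,v) w + B''' x for A = |y| P, B = |y|^2 Q, and
   contracting with F_y most terms cancel, leaving
     L_ijk = -(phi/2) (L1 h_i h_j h_k + L2 (h_i pi_jk + h_j pi_ik + h_k pi_ij))
   with h = xhor and pi the angular form.  In the orthogonal frame (yhat, xhor) the fundamental
   tensor is a multiple of the identity plus dyads, and so is its inverse.  Since L vanishes in
   the yhat-directions, only the trace and the (xhor, xhor)-coefficient of g^-1 enter J, which
   gives H.  The denominators are positive: phi > 0 and phi - s phi_s + (r^2 - s^2) phi_ss > 0
   come from positive definiteness of g along suitable vectors, and phi - s phi_s > 0 then
   follows by a monotonicity argument in s.  For n = 1 the vector xhor vanishes and both sides
   are zero. *)

section \<open>Partial derivatives\<close>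

lemma pd_eq_has_derivative:
  fixes f :: "real^'n \<Rightarrow> real"
  assumes "(f has_derivative f') (at y)"
  shows "pd f i y = f' (axis i 1)"
proof -
  let ?w = "axis i (1::real) :: real^'n"
  have "((\<lambda>t::real. y + t *\<^sub>R ?w) has_derivative (\<lambda>t. t *\<^sub>R ?w)) (at 0)"
    by (auto intro!: derivative_eq_intros)
  from has_derivative_compose[OF this] assms
  have "((\<lambda>t. f (y + t *\<^sub>R ?w)) has_derivative (\<lambda>t. f' (t *\<^sub>R ?w))) (at 0)"
    by simp
  moreover have "(\<lambda>t. f' (t *\<^sub>R ?w)) = (\<lambda>t. f' ?w * t)"
    using has_derivative_linear[OF assms] by (simp add: linear_scale mult.commute)
  ultimately have "((\<lambda>t. f (y + t *\<^sub>R ?w)) has_real_derivative f' ?w) (at 0)"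
    by (simp add: has_field_derivative_def)
  then show ?thesis unfolding pd_def pdir_def by (rule DERIV_imp_deriv)
qed

lemma pd_eq_has_derivative_on_open:
  fixes f g :: "real^'n \<Rightarrow> real"
  assumes "open S" "y \<in> S" "\<And>z. z \<in> S \<Longrightarrow> g z = f z" "(g has_derivative g') (at y)"
  shows "pd f i y = g' (axis i 1)"
  using has_derivative_transform_within_open[OF assms(4,1,2)] assms(3)
  by (intro pd_eq_has_derivative) blast

lemma open_nonzero: "open (- {0 :: 'a::real_normed_vector})"
  by (simp add: open_Compl)

lemma has_derivative_vec_nth:
  "(f has_derivative f') F \<Longrightarrow> ((\<lambda>y. f y $ l) has_derivative (\<lambda>v. f' v $ l)) F"
  by (rule bounded_linear.has_derivative[OF bounded_linear_vec_nth])

lemma pds_replicate_snd: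
  "pds (\<lambda>(a, b). \<phi> a b) (replicate k (0::real, 1::real)) = (\<lambda>(a, b). (ds ^^ k) \<phi> a b)"
proof (induction k)
  case (Suc k)
  have step: "pdir (\<lambda>(a, b). (ds ^^ k) \<phi> a b) (0, 1) (a, b) = (ds ^^ Suc k) \<phi> a b" for a b
  proof -
    have "pdir (\<lambda>(a, b). (ds ^^ k) \<phi> a b) (0, 1) (a, b) = deriv (\<lambda>t. (ds ^^ k) \<phi> a (b + t)) 0"
      by (simp add: pdir_def)
    also have "\<dots> = deriv (\<lambda>t. (ds ^^ k) \<phi> a t) b"
      unfolding deriv_def using DERIV_shift[of "(ds ^^ k) \<phi> a" _ 0 b]
      by (simp add: add.commute)
    also have "\<dots> = (ds ^^ Suc k) \<phi> a b" by (simp add: ds_def)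
    finally show ?thesis .
  qed
  have "pds (\<lambda>(a, b). \<phi> a b) (replicate (Suc k) (0, 1)) = pdir (\<lambda>(a, b). (ds ^^ k) \<phi> a b) (0, 1)"
    by (simp add: Suc.IH)
  with step show ?case by (simp add: fun_eq_iff)
qed simp

lemma smooth_on_has_real_derivative_funpow_ds:
  assumes "smooth_on D (\<lambda>(r, s). \<phi> r s)" "(r, t) \<in> D"
  shows "((ds ^^ k) \<phi> r has_real_derivative (ds ^^ Suc k) \<phi> r t) (at t)"
proof -
  have "set (replicate k (0::real, 1::real)) \<subseteq> Basis" by (auto simp: Basis_prod_def)
  with assms(1) have "open D" "pds (\<lambda>(a, b). \<phi> a b) (replicate k (0, 1)) differentiable_on D"
    unfolding smooth_on_def by auto
  then have "open D" "(\<lambda>(a, b). (ds ^^ k) \<phi> a b) differentiable_on D"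
    by (simp_all only: pds_replicate_snd)
  with assms(2) have "(\<lambda>(a, b). (ds ^^ k) \<phi> a b) differentiable at (r, t)"
    by (simp add: differentiable_on_eq_differentiable_at)
  then have "(\<lambda>\<tau>. (ds ^^ k) \<phi> r \<tau>) differentiable at t"
    using differentiable_chain_at[of "\<lambda>\<tau>. (r, \<tau>)" t] by (fastforce simp: o_def)
  then show ?thesis by (simp add: DERIV_deriv_iff_real_differentiable[symmetric] ds_def)
qed

lemma smooth_on_has_real_derivative_ds:
  assumes "smooth_on D (\<lambda>(r, s). \<phi> r s)" "(r, t) \<in> D"
  shows "(\<phi> r has_real_derivative ds \<phi> r t) (at t)"
    and "(ds \<phi> r has_real_derivative ds (ds \<phi>) r t) (at t)"
    and "(ds (ds \<phi>) r has_real_derivative ds (ds (ds \<phi>)) r t) (at t)"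
  using smooth_on_has_real_derivative_funpow_ds[OF assms, of 0]
    smooth_on_has_real_derivative_funpow_ds[OF assms, of 1]
    smooth_on_has_real_derivative_funpow_ds[OF assms, of 2]
  by (simp_all add: numeral_2_eq_2)

section \<open>Matrices spanned by the identity and two dyads\<close>

lemma linear_eq_sum_axis:
  fixes L :: "real^'n \<Rightarrow> real"
  assumes "linear L"
  shows "L v = (\<Sum>l\<in>UNIV. v $ l * L (axis l 1))"
proof -
  have "L v = L (\<Sum>l\<in>UNIV. v $ l *\<^sub>R axis l 1)"
    using basis_expansion[of v] by (simp add: scalar_mult_eq_scaleR)
  then show ?thesis by (simp add: linear_sum[OF assms] linear_scale[OF assms])
qed

lemma bilinear_eq_sum_axis:
  fixes B :: "real^'n \<Rightarrow> real^'n \<Rightarrow> real"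
  assumes "bilinear B"
  shows "B v w = (\<Sum>j\<in>UNIV. \<Sum>k\<in>UNIV. v $ j * w $ k * B (axis j 1) (axis k 1))"
proof -
  have left: "linear (\<lambda>v. B v w)" and right: "\<And>j. linear (B (axis j 1))"
    using assms by (simp_all add: bilinear_def)
  have "B v w = (\<Sum>j\<in>UNIV. v $ j * B (axis j 1) w)"
    by (rule linear_eq_sum_axis[OF left])
  also have "\<dots> = (\<Sum>j\<in>UNIV. \<Sum>k\<in>UNIV. v $ j * w $ k * B (axis j 1) (axis k 1))"
    by (simp add: linear_eq_sum_axis[OF right, where v=w] sum_distrib_left mult.assoc)
  finally show ?thesis .
qed

lemma matrix_inv_unique:
  fixes A B :: "'a::field^'n^'n"
  assumes "A ** B = mat 1"
  shows "matrix_inv A = B"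
proof -
  have BA: "B ** A = mat 1" using assms matrix_left_right_inverse by blast
  have inv: "A ** matrix_inv A = mat 1 \<and> matrix_inv A ** A = mat 1"
    unfolding matrix_inv_def by (rule someI[of _ B]) (use assms BA in blast)
  have "matrix_inv A = (B ** A) ** matrix_inv A" by (simp add: BA)
  also have "\<dots> = B" by (metis inv matrix_mul_assoc matrix_mul_rid)
  finally show ?thesis .
qed

definition dyad_mat :: "real^'n \<Rightarrow> real^'n \<Rightarrow> real \<Rightarrow> real \<Rightarrow> real \<Rightarrow> real \<Rightarrow> real \<Rightarrow> real^'n^'n" where
  "dyad_mat a b c kaa kab kba kbb = (\<chi> i j. c * (if i = j then 1 else 0)
     + kaa * (a$i * a$j) + kab * (a$i * b$j) + kba * (b$i * a$j) + kbb * (b$i * b$j))"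

lemma dyad_mat_mult:
  fixes a b :: "real^'n"
  shows "dyad_mat a b c k1 k2 k3 k4 ** dyad_mat a b c' m1 m2 m3 m4 = dyad_mat a b (c * c')
    (c * m1 + c' * k1 + k1 * m1 * (a \<bullet> a) + (k1 * m3 + k2 * m1) * (a \<bullet> b) + k2 * m3 * (b \<bullet> b))
    (c * m2 + c' * k2 + k1 * m2 * (a \<bullet> a) + (k1 * m4 + k2 * m2) * (a \<bullet> b) + k2 * m4 * (b \<bullet> b))
    (c * m3 + c' * k3 + k3 * m1 * (a \<bullet> a) + (k3 * m3 + k4 * m1) * (a \<bullet> b) + k4 * m3 * (b \<bullet> b))
    (c * m4 + c' * k4 + k3 * m2 * (a \<bullet> a) + (k3 * m4 + k4 * m2) * (a \<bullet> b) + k4 * m4 * (b \<bullet> b))"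
proof -
  have "(\<Sum>k\<in>UNIV. dyad_mat a b c k1 k2 k3 k4 $ i $ k * dyad_mat a b c' m1 m2 m3 m4 $ k $ j)
     = c * c' * (if i = j then 1 else 0)
       + c * (a$i * (m1 * a$j + m2 * b$j) + b$i * (m3 * a$j + m4 * b$j))
       + c' * (a$i * (k1 * a$j + k2 * b$j) + b$i * (k3 * a$j + k4 * b$j))
       + (a$i * k1 + b$i * k3) * ((a \<bullet> a) * (m1 * a$j + m2 * b$j) + (a \<bullet> b) * (m3 * a$j + m4 * b$j))
       + (a$i * k2 + b$i * k4) * ((a \<bullet> b) * (m1 * a$j + m2 * b$j) + (b \<bullet> b) * (m3 * a$j + m4 * b$j))"
    for i j
    by (simp add: dyad_mat_def inner_vec_def algebra_simps sum.distrib sum_distrib_left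
        sum_distrib_right if_distrib[of "\<lambda>z. z * _"] if_distrib[of "\<lambda>z. _ * z"] cong: if_cong)
  then show ?thesis
    by (simp add: matrix_matrix_mult_def dyad_mat_def vec_eq_iff algebra_simps)
qed

lemma dyad_mat_eq_mat_1I:
  "c = 1 \<Longrightarrow> kaa = 0 \<Longrightarrow> kab = 0 \<Longrightarrow> kba = 0 \<Longrightarrow> kbb = 0 \<Longrightarrow> dyad_mat a b c kaa kab kba kbb = mat 1"
  by (simp add: dyad_mat_def mat_def vec_eq_iff)

lemma dyad_mat_contract:
  fixes B :: "real^'n \<Rightarrow> real^'n \<Rightarrow> real"
  assumes "bilinear B"
  shows "(\<Sum>j\<in>UNIV. \<Sum>k\<in>UNIV. dyad_mat a b c kaa kab kba kbb $ j $ k * B (axis j 1) (axis k 1))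
    = c * (\<Sum>j\<in>UNIV. B (axis j 1) (axis j 1)) + kaa * B a a + kab * B a b + kba * B b a + kbb * B b b"
proof -
  have diag: "(\<Sum>j\<in>UNIV. \<Sum>k\<in>UNIV. (if j = k then 1 else 0) * B (axis j 1) (axis k 1))
      = (\<Sum>j\<in>UNIV. B (axis j 1) (axis j 1))"
    by (simp add: if_distrib[of "\<lambda>z. z * _"] cong: if_cong)
  show ?thesis
    unfolding bilinear_eq_sum_axis[OF assms, of a a] bilinear_eq_sum_axis[OF assms, of a b]
      bilinear_eq_sum_axis[OF assms, of b a] bilinear_eq_sum_axis[OF assms, of b b] diag[symmetric]
    by (simp add: dyad_mat_def algebra_simps sum.distrib sum_distrib_left)
qed

section \<open>Positivity of the tangent intercept of a profile\<close>

lemma has_real_derivative_tangent_intercept_times_root: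
  assumes "(f has_real_derivative f' t) (at t)" "(f' has_real_derivative f'' t) (at t)"
    and t: "\<bar>t\<bar> < r"
  shows "((\<lambda>t. (f t - t * f' t) * sqrt (r\<^sup>2 - t\<^sup>2)) has_real_derivative
    - t * (f t - t * f' t + (r\<^sup>2 - t\<^sup>2) * f'' t) / sqrt (r\<^sup>2 - t\<^sup>2)) (at t)"
proof -
  have "r\<^sup>2 - t\<^sup>2 > 0" using power_strict_mono[OF t abs_ge_zero, of 2] by simp
  then have root: "sqrt (r\<^sup>2 - t\<^sup>2) * sqrt (r\<^sup>2 - t\<^sup>2) = r\<^sup>2 - t\<^sup>2" "sqrt (r\<^sup>2 - t\<^sup>2) > 0"
    by simp_all
  have "((\<lambda>t. f t - t * f' t) has_real_derivative f' t - (f' t + t * f'' t)) (at t)"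
    by (auto intro!: derivative_eq_intros assms(1,2))
  moreover have "((\<lambda>t. sqrt (r\<^sup>2 - t\<^sup>2)) has_real_derivative inverse (sqrt (r\<^sup>2 - t\<^sup>2)) / 2 * (- 2 * t)) (at t)"
    by (rule DERIV_chain2[OF DERIV_real_sqrt]) (use root in \<open>auto intro!: derivative_eq_intros\<close>)
  ultimately have "((\<lambda>t. (f t - t * f' t) * sqrt (r\<^sup>2 - t\<^sup>2)) has_real_derivative
      (f' t - (f' t + t * f'' t)) * sqrt (r\<^sup>2 - t\<^sup>2)
      + inverse (sqrt (r\<^sup>2 - t\<^sup>2)) / 2 * (- 2 * t) * (f t - t * f' t)) (at t)"
    by (rule DERIV_mult)
  then show ?thesis using root by (simp add: field_simps)
qed

(* h t = (f t - t f' t) sqrt (r^2 - t^2) vanishes at t = -r and t = r; by the hypothesis pos it is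
   increasing on [-r, 0] and decreasing on [0, r], hence positive in between. *)
lemma tangent_intercept_pos:
  fixes f f' f'' :: "real \<Rightarrow> real"
  assumes f': "\<And>t. \<bar>t\<bar> \<le> r \<Longrightarrow> (f has_real_derivative f' t) (at t)"
    and f'': "\<And>t. \<bar>t\<bar> \<le> r \<Longrightarrow> (f' has_real_derivative f'' t) (at t)"
    and pos: "\<And>t. \<bar>t\<bar> < r \<Longrightarrow> f t - t * f' t + (r\<^sup>2 - t\<^sup>2) * f'' t > 0"
    and \<tau>: "\<bar>\<tau>\<bar> < r"
  shows "f \<tau> - \<tau> * f' \<tau> > 0"
proof -
  define h where "h t = (f t - t * f' t) * sqrt (r\<^sup>2 - t\<^sup>2)" for t
  have root_pos: "sqrt (r\<^sup>2 - t\<^sup>2) > 0" if "\<bar>t\<bar> < r" for t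
    using power_strict_mono[OF that abs_ge_zero, of 2] by simp
  have h': "(h has_real_derivative - t * (f t - t * f' t + (r\<^sup>2 - t\<^sup>2) * f'' t) / sqrt (r\<^sup>2 - t\<^sup>2)) (at t)"
    if "\<bar>t\<bar> < r" for t
    unfolding h_def[abs_def] using that
    by (intro has_real_derivative_tangent_intercept_times_root f' f'') auto
  have cont: "continuous_on {a..b} h" if "- r \<le> a" "b \<le> r" for a b
    using that unfolding h_def
    by (intro continuous_at_imp_continuous_on ballI continuous_intros
        DERIV_isCont[OF f'] DERIV_isCont[OF f'']) auto
  have "h \<tau> > 0"
  proof (cases "\<tau> \<ge> 0")
    case True
    have "\<exists>d. (h has_real_derivative d) (at t) \<and> d < 0" if "\<tau> < t" "t < r" for t
    proof -
      from True that have t: "\<bar>t\<bar> < r" "t > 0" by auto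
      have "t * (f t - t * f' t + (r\<^sup>2 - t\<^sup>2) * f'' t) / sqrt (r\<^sup>2 - t\<^sup>2) > 0"
        using pos[OF t(1)] root_pos[OF t(1)] t(2) by simp
      then show ?thesis using h'[OF t(1)] by (intro exI conjI) auto
    qed
    then have "h r < h \<tau>"
      using DERIV_neg_imp_decreasing_open[of \<tau> r h] \<tau> True cont[of \<tau> r] by auto
    then show ?thesis by (simp add: h_def)
  next
    case False
    have "\<exists>d. (h has_real_derivative d) (at t) \<and> d > 0" if "- r < t" "t < \<tau>" for t
    proof -
      from False that have t: "\<bar>t\<bar> < r" "t < 0" by auto
      have "t * (f t - t * f' t + (r\<^sup>2 - t\<^sup>2) * f'' t) / sqrt (r\<^sup>2 - t\<^sup>2) < 0"
        using pos[OF t(1)] root_pos[OF t(1)] t(2) by (simp add: divide_neg_pos mult_neg_pos)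
      then show ?thesis using h'[OF t(1)] by (intro exI conjI) auto
    qed
    then have "h (- r) < h \<tau>"
      using DERIV_pos_imp_increasing_open[of "- r" \<tau> h] \<tau> False cont[of "- r" \<tau>] by auto
    then show ?thesis by (simp add: h_def)
  qed
  then show ?thesis using root_pos[OF \<tau>] by (simp add: h_def zero_less_mult_iff)
qed

section \<open>The frame of a spherically symmetric metric\<close>

locale sph_frame =
  fixes x :: "real^'n"
begin

definition s_of :: "real^'n \<Rightarrow> real" where
  "s_of y = (x \<bullet> y) / norm y"

definition yhat :: "real^'n \<Rightarrow> real^'n" where
  "yhat y = y /\<^sub>R norm y"

definition xhor :: "real^'n \<Rightarrow> real^'n" where
  "xhor y = x - s_of y *\<^sub>R yhat y"

definition hat :: "real^'n \<Rightarrow> real^'n \<Rightarrow> real" where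
  "hat y w = yhat y \<bullet> w"

definition hor :: "real^'n \<Rightarrow> real^'n \<Rightarrow> real" where
  "hor y w = xhor y \<bullet> w"

definition ang :: "real^'n \<Rightarrow> real^'n \<Rightarrow> real^'n \<Rightarrow> real" where
  "ang y v w = v \<bullet> w - hat y v * hat y w"

definition B_of :: "real \<Rightarrow> real" where
  "B_of \<sigma> = (norm x)\<^sup>2 - \<sigma>\<^sup>2"

lemma s_of_bound: "\<bar>s_of y\<bar> \<le> norm x"
proof (cases "y = 0")
  case False
  have "\<bar>x \<bullet> y\<bar> \<le> norm x * norm y" by (rule Cauchy_Schwarz_ineq2)
  then show ?thesis using False by (simp add: s_of_def abs_div pos_divide_le_eq)
qed (simp add: s_of_def)

lemma hat_eq: "hat y w = (y \<bullet> w) / norm y"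
  by (simp add: hat_def yhat_def divide_inverse_commute)

lemma hor_eq: "hor y w = x \<bullet> w - s_of y * hat y w"
  by (simp add: hor_def xhor_def hat_def inner_diff_left)

lemma hat_axis: "hat y (axis l 1) = yhat y $ l"
  by (simp add: hat_def inner_axis)

lemma hor_axis: "hor y (axis l 1) = xhor y $ l"
  by (simp add: hor_def inner_axis)

lemma xhor_nth: "xhor y $ l = x $ l - s_of y * y $ l / norm y"
  by (simp add: xhor_def yhat_def divide_inverse_commute)

lemma hat_add: "hat y (v + w) = hat y v + hat y w"
  and hat_scaleR: "hat y (c *\<^sub>R v) = c * hat y v"
  and hor_add: "hor y (v + w) = hor y v + hor y w"
  and hor_scaleR: "hor y (c *\<^sub>R v) = c * hor y v"
  by (simp_all add: hat_def hor_def inner_add_right)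

lemma linear_hor: "linear (hor y)"
  by (simp add: linear_iff hor_add hor_scaleR)

lemma linear_ang: "linear (ang y t)"
  by (simp add: linear_iff ang_def hat_add hat_scaleR inner_add_right algebra_simps)

lemma ang_commute: "ang y v w = ang y w v"
  by (simp add: ang_def inner_commute)

context
  fixes y :: "real^'n"
  assumes y: "y \<noteq> 0"
begin

lemma inner_yhat_yhat: "yhat y \<bullet> yhat y = 1"
  using y by (simp add: yhat_def dot_square_norm power2_eq_square)

lemma hat_self: "hat y y = norm y"
  using y by (simp add: hat_eq dot_square_norm power2_eq_square)

lemma hat_yhat: "hat y (yhat y) = 1"
  by (simp add: hat_def inner_yhat_yhat)

lemma hat_x: "hat y x = s_of y"
  by (simp add: hat_eq s_of_def inner_commute)

lemma hor_self: "hor y y = 0"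
  using y by (simp add: hor_eq hat_self s_of_def)

lemma hor_yhat: "hor y (yhat y) = 0"
proof -
  have "x \<bullet> yhat y = s_of y" using hat_x by (simp add: hat_def inner_commute)
  then show ?thesis by (simp add: hor_eq hat_yhat)
qed

lemma hat_xhor: "hat y (xhor y) = 0"
  using hor_yhat by (simp add: hat_def hor_def inner_commute)

lemma hor_x: "hor y x = B_of (s_of y)"
  by (simp add: hor_eq hat_x B_of_def dot_square_norm power2_eq_square)

lemma hor_xhor: "hor y (xhor y) = B_of (s_of y)"
proof -
  have "hor y (xhor y) = hor y x - s_of y * hor y (yhat y)"
    by (simp add: hor_def xhor_def[of y] inner_diff_right)
  then show ?thesis by (simp add: hor_x hor_yhat)
qed

lemma inner_yhat_xhor: "yhat y \<bullet> xhor y = 0"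
  using hat_xhor by (simp add: hat_def)

lemma inner_xhor_xhor: "xhor y \<bullet> xhor y = B_of (s_of y)"
  using hor_xhor by (simp add: hor_def)

lemma ang_yhat: "ang y (yhat y) w = 0" "ang y w (yhat y) = 0"
  by (simp_all add: ang_def hat_def inner_yhat_yhat inner_commute)

lemma ang_xhor: "ang y t (xhor y) = hor y t"
  by (simp add: ang_def hat_xhor hor_def inner_commute)

lemma sum_hor_hor: "(\<Sum>j\<in>UNIV. hor y (axis j 1) * hor y (axis j 1)) = B_of (s_of y)"
  using linear_eq_sum_axis[OF linear_hor, of y "xhor y"] by (simp add: hor_axis hor_xhor)

lemma sum_hor_ang: "(\<Sum>j\<in>UNIV. hor y (axis j 1) * ang y t (axis j 1)) = hor y t"
  using linear_eq_sum_axis[OF linear_ang, of y t "xhor y"] by (simp add: hor_axis ang_xhor)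

lemma sum_ang_axis: "(\<Sum>j\<in>UNIV. ang y (axis j 1) (axis j 1)) = real CARD('n) - 1"
proof -
  have "(\<Sum>j\<in>UNIV. hat y (axis j 1) * hat y (axis j 1)) = 1"
    using inner_yhat_yhat by (simp add: hat_axis inner_vec_def)
  then show ?thesis by (simp add: ang_def inner_axis_axis sum_subtractf)
qed

lemma has_derivative_norm_at: "(norm has_derivative hat y) (at y)"
proof -
  have "hat y = (\<lambda>h. h \<bullet> sgn y)"
    by (simp add: fun_eq_iff hat_def yhat_def sgn_div_norm inner_commute)
  then show ?thesis using has_derivative_norm[OF y] by simp
qed

lemma has_derivative_hat: "((\<lambda>y. hat y w) has_derivative (\<lambda>v. ang y v w / norm y)) (at y)"
  unfolding hat_eq[abs_def]
  by (rule has_derivative_eq_rhs, (rule derivative_eq_intros has_derivative_norm_at refl | (simp add: y; fail))+)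
     (use y in \<open>simp add: fun_eq_iff ang_def hat_eq field_simps power2_eq_square\<close>)

lemma has_derivative_s_of: "(s_of has_derivative (\<lambda>v. hor y v / norm y)) (at y)"
  unfolding s_of_def[abs_def]
  by (rule has_derivative_eq_rhs, (rule derivative_eq_intros has_derivative_norm_at refl | (simp add: y; fail))+)
     (use y in \<open>simp add: fun_eq_iff hor_eq hat_eq s_of_def field_simps power2_eq_square\<close>)

lemma has_derivative_hor:
  "((\<lambda>y. hor y w) has_derivative (\<lambda>v. - (hor y v * hat y w + s_of y * ang y v w) / norm y)) (at y)"
  unfolding hor_eq[abs_def]
  by (rule has_derivative_eq_rhs,
      (rule derivative_eq_intros has_derivative_s_of has_derivative_hat refl | (simp add: y; fail))+)
     (use y in \<open>simp add: fun_eq_iff hor_eq field_simps\<close>)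

lemma has_derivative_ang:
  "((\<lambda>y. ang y t w) has_derivative (\<lambda>v. - (ang y v t * hat y w + hat y t * ang y v w) / norm y)) (at y)"
  unfolding ang_def[of _ t w]
  by (rule has_derivative_eq_rhs,
      (rule derivative_eq_intros has_derivative_hat refl | (simp add: y; fail))+)
     (use y in \<open>simp add: fun_eq_iff field_simps\<close>)

lemma has_derivative_profile:
  assumes "(f has_real_derivative d) (at (s_of y))"
  shows "((\<lambda>y. f (s_of y)) has_derivative (\<lambda>v. d * hor y v / norm y)) (at y)"
  using has_derivative_compose[OF has_derivative_s_of assms[unfolded has_field_derivative_def]]
  by simp

end

lemma xhor_eq_0_if_card_1:
  assumes "CARD('n) = 1" "y \<noteq> 0"
  shows "xhor y = 0"
proof -
  obtain i :: 'n where UNIV: "UNIV = {i}" using assms(1) card_1_singletonE by blast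
  then have all: "j = i" for j :: 'n by (metis UNIV_I singletonD)
  have "xhor y $ i * y $ i = 0"
    using hor_self[OF assms(2)] by (simp add: hor_def inner_vec_def UNIV)
  moreover have "y $ i \<noteq> 0" using assms(2) all by (metis vec_eq_iff zero_index)
  ultimately show ?thesis using all by (metis vec_eq_iff zero_index mult_eq_0_iff)
qed

lemma s_of_surj:
  assumes "CARD('n) \<ge> 2" "\<bar>\<tau>\<bar> \<le> norm x"
  obtains y where "y \<noteq> 0" "s_of y = \<tau>"
proof (cases "x = 0")
  case True
  have "s_of (axis undefined 1) = 0" unfolding s_of_def using True by simp
  then show ?thesis
    using True assms(2) by (intro that[of "axis undefined 1"]) (simp_all add: axis_eq_0_iff)
next
  case False
  from assms(1) have "2 \<le> DIM(real^'n)" by simp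
  from orthogonal_to_vector_exists[OF this, of x]
  obtain z where z: "z \<noteq> 0" "x \<bullet> z = 0" by (auto simp: orthogonal_def)
  define r where "r = norm x"
  have r: "r > 0" using False by (simp add: r_def)
  define e where "e = (r / norm z) *\<^sub>R z"
  have xe: "x \<bullet> e = 0" and ee: "e \<bullet> e = r\<^sup>2"
    using z by (simp_all add: e_def dot_square_norm power2_eq_square)
  have root: "sqrt (r\<^sup>2 - \<tau>\<^sup>2) * sqrt (r\<^sup>2 - \<tau>\<^sup>2) = r\<^sup>2 - \<tau>\<^sup>2"
    using assms(2) abs_le_square_iff[of \<tau> "norm x"] by (simp add: r_def)
  define y where "y = \<tau> *\<^sub>R x + sqrt (r\<^sup>2 - \<tau>\<^sup>2) *\<^sub>R e"
  have "y \<bullet> y = \<tau>\<^sup>2 * (x \<bullet> x) + (sqrt (r\<^sup>2 - \<tau>\<^sup>2) * sqrt (r\<^sup>2 - \<tau>\<^sup>2)) * (e \<bullet> e)"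
    using xe by (simp add: y_def inner_add_left inner_add_right inner_commute power2_eq_square algebra_simps)
  also have "\<dots> = (r\<^sup>2)\<^sup>2"
    unfolding root ee by (simp add: r_def dot_square_norm power2_eq_square algebra_simps)
  finally have "norm y = r\<^sup>2"
    by (metis dot_square_norm norm_ge_zero power2_eq_iff_nonneg zero_le_power2)
  moreover have "x \<bullet> y = \<tau> * r\<^sup>2"
    using xe by (simp add: y_def inner_add_right r_def dot_square_norm)
  ultimately show ?thesis using r by (intro that[of y]) (auto simp: s_of_def)
qed

(* hom1_dk f f' ... y is the k-th derivative at y of y |-> |y| f (s_of y), and hom2_dk that of
   y |-> |y|^2 f (s_of y); the arguments f', f'', f''' stand for the derivatives of f. *)
definition hom1_d1 :: "(real \<Rightarrow> real) \<Rightarrow> (real \<Rightarrow> real) \<Rightarrow> real^'n \<Rightarrow> real^'n \<Rightarrow> real" where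
  "hom1_d1 f f' y w = f (s_of y) * hat y w + f' (s_of y) * hor y w"

definition hom1_d2 :: "(real \<Rightarrow> real) \<Rightarrow> (real \<Rightarrow> real) \<Rightarrow> (real \<Rightarrow> real)
    \<Rightarrow> real^'n \<Rightarrow> real^'n \<Rightarrow> real^'n \<Rightarrow> real" where
  "hom1_d2 f f' f'' y v w =
    ((f (s_of y) - s_of y * f' (s_of y)) * ang y v w + f'' (s_of y) * hor y v * hor y w) / norm y"

definition hom1_d3 :: "(real \<Rightarrow> real) \<Rightarrow> (real \<Rightarrow> real) \<Rightarrow> (real \<Rightarrow> real) \<Rightarrow> (real \<Rightarrow> real)
    \<Rightarrow> real^'n \<Rightarrow> real^'n \<Rightarrow> real^'n \<Rightarrow> real^'n \<Rightarrow> real" where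
  "hom1_d3 f f' f'' f''' y t v w =
    (f''' (s_of y) * hor y t * hor y v * hor y w
     - s_of y * f'' (s_of y) * (hor y t * ang y v w + hor y v * ang y t w + hor y w * ang y t v)
     - (f (s_of y) - s_of y * f' (s_of y)) * (hat y t * ang y v w + hat y v * ang y t w + hat y w * ang y t v)
     - f'' (s_of y) * (hat y t * hor y v * hor y w + hat y v * hor y t * hor y w + hat y w * hor y t * hor y v))
    / norm y ^ 2"

definition hom2_d1 :: "(real \<Rightarrow> real) \<Rightarrow> (real \<Rightarrow> real) \<Rightarrow> real^'n \<Rightarrow> real^'n \<Rightarrow> real" where
  "hom2_d1 q q' y w = norm y * (2 * q (s_of y) * hat y w + q' (s_of y) * hor y w)"

definition hom2_d2 :: "(real \<Rightarrow> real) \<Rightarrow> (real \<Rightarrow> real) \<Rightarrow> (real \<Rightarrow> real)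
    \<Rightarrow> real^'n \<Rightarrow> real^'n \<Rightarrow> real^'n \<Rightarrow> real" where
  "hom2_d2 q q' q'' y v w =
    2 * q (s_of y) * hat y v * hat y w + q' (s_of y) * (hat y v * hor y w + hat y w * hor y v)
    + (2 * q (s_of y) - s_of y * q' (s_of y)) * ang y v w + q'' (s_of y) * hor y v * hor y w"

definition hom2_d3 :: "(real \<Rightarrow> real) \<Rightarrow> (real \<Rightarrow> real) \<Rightarrow> (real \<Rightarrow> real)
    \<Rightarrow> real^'n \<Rightarrow> real^'n \<Rightarrow> real^'n \<Rightarrow> real^'n \<Rightarrow> real" where
  "hom2_d3 q' q'' q''' y t v w =
    (q''' (s_of y) * hor y t * hor y v * hor y w
     + (q' (s_of y) - s_of y * q'' (s_of y)) * (hor y t * ang y v w + hor y v * ang y t w + hor y w * ang y t v))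
    / norm y"

lemma linear_hom1_d1: "linear (hom1_d1 f f' y)"
  by (simp add: linear_iff hom1_d1_def hat_add hat_scaleR hor_add hor_scaleR algebra_simps)

context
  fixes y :: "real^'n"
  assumes y: "y \<noteq> 0"
begin

lemmas has_derivative_frame =
  has_derivative_norm_at[OF y] has_derivative_s_of[OF y] has_derivative_hat[OF y]
  has_derivative_hor[OF y] has_derivative_ang[OF y]

lemma has_derivative_hom1:
  assumes "(f has_real_derivative f' (s_of y)) (at (s_of y))"
  shows "((\<lambda>y. norm y * f (s_of y)) has_derivative hom1_d1 f f' y) (at y)"
  by (rule has_derivative_eq_rhs, (rule derivative_eq_intros has_derivative_frame
        has_derivative_profile[OF y assms] refl | (simp add: y; fail))+)
     (use y in \<open>simp add: fun_eq_iff hom1_d1_def field_simps\<close>)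

lemma has_derivative_hom1_d1:
  assumes "(f has_real_derivative f' (s_of y)) (at (s_of y))"
    and "(f' has_real_derivative f'' (s_of y)) (at (s_of y))"
  shows "((\<lambda>y. hom1_d1 f f' y w) has_derivative (\<lambda>v. hom1_d2 f f' f'' y v w)) (at y)"
  unfolding hom1_d1_def
  by (rule has_derivative_eq_rhs, (rule derivative_eq_intros has_derivative_frame
        has_derivative_profile[OF y assms(1)] has_derivative_profile[OF y assms(2)] refl
        | (simp add: y; fail))+)
     (use y in \<open>simp add: fun_eq_iff hom1_d2_def field_simps\<close>)

lemma has_derivative_hom1_d2:
  assumes "(f has_real_derivative f' (s_of y)) (at (s_of y))"
    and "(f' has_real_derivative f'' (s_of y)) (at (s_of y))"
    and "(f'' has_real_derivative f''' (s_of y)) (at (s_of y))"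
  shows "((\<lambda>y. hom1_d2 f f' f'' y v w) has_derivative (\<lambda>t. hom1_d3 f f' f'' f''' y t v w)) (at y)"
  unfolding hom1_d2_def
  by (rule has_derivative_eq_rhs, (rule derivative_eq_intros has_derivative_frame
        has_derivative_profile[OF y assms(1)] has_derivative_profile[OF y assms(2)]
        has_derivative_profile[OF y assms(3)] refl | (simp add: y; fail))+)
     (use y in \<open>simp add: fun_eq_iff hom1_d3_def ang_commute[of y _ t] field_simps power2_eq_square\<close>)

lemma has_derivative_hom2:
  assumes "(q has_real_derivative q' (s_of y)) (at (s_of y))"
  shows "((\<lambda>y. (norm y)\<^sup>2 * q (s_of y)) has_derivative hom2_d1 q q' y) (at y)"
  by (rule has_derivative_eq_rhs, (rule derivative_eq_intros has_derivative_frame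
        has_derivative_profile[OF y assms] refl | (simp add: y; fail))+)
     (use y in \<open>simp add: fun_eq_iff hom2_d1_def field_simps power2_eq_square\<close>)

lemma has_derivative_hom2_d1:
  assumes "(q has_real_derivative q' (s_of y)) (at (s_of y))"
    and "(q' has_real_derivative q'' (s_of y)) (at (s_of y))"
  shows "((\<lambda>y. hom2_d1 q q' y w) has_derivative (\<lambda>v. hom2_d2 q q' q'' y v w)) (at y)"
  unfolding hom2_d1_def
  by (rule has_derivative_eq_rhs, (rule derivative_eq_intros has_derivative_frame
        has_derivative_profile[OF y assms(1)] has_derivative_profile[OF y assms(2)] refl
        | (simp add: y; fail))+)
     (use y in \<open>simp add: fun_eq_iff hom2_d2_def field_simps\<close>)

lemma has_derivative_hom2_d2:
  assumes "(q has_real_derivative q' (s_of y)) (at (s_of y))"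
    and "(q' has_real_derivative q'' (s_of y)) (at (s_of y))"
    and "(q'' has_real_derivative q''' (s_of y)) (at (s_of y))"
  shows "((\<lambda>y. hom2_d2 q q' q'' y v w) has_derivative (\<lambda>t. hom2_d3 q' q'' q''' y t v w)) (at y)"
  unfolding hom2_d2_def
  by (rule has_derivative_eq_rhs, (rule derivative_eq_intros has_derivative_frame
        has_derivative_profile[OF y assms(1)] has_derivative_profile[OF y assms(2)]
        has_derivative_profile[OF y assms(3)] refl | (simp add: y; fail))+)
     (use y in \<open>simp add: fun_eq_iff hom2_d3_def ang_commute[of y _ t] field_simps\<close>)

end

end

section \<open>Landsberg and mean Landsberg curvature\<close>

(* The metric seen from a fixed base point x: f0, p0, q0 are phi, P, Q with r = |x| frozen, and
   f1, f2, p1, ... their successive derivatives in s. *)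
locale sph_metric_at = sph_frame x for x :: "real^'n" +
  fixes F :: "real^'n \<Rightarrow> real^'n \<Rightarrow> real"
    and f0 f1 f2 p0 p1 p2 p3 q0 q1 q2 q3 :: "real \<Rightarrow> real"
  assumes F_eq: "\<And>y. F x y = norm y * f0 (s_of y)"
    and spray_eq: "\<And>y l. y \<noteq> 0 \<Longrightarrow>
      spray F x y l = norm y * p0 (s_of y) * y $ l + (norm y)\<^sup>2 * q0 (s_of y) * x $ l"
    and f_deriv: "\<And>t. \<bar>t\<bar> \<le> norm x \<Longrightarrow> (f0 has_real_derivative f1 t) (at t)"
      "\<And>t. \<bar>t\<bar> \<le> norm x \<Longrightarrow> (f1 has_real_derivative f2 t) (at t)"
    and p_deriv: "\<And>t. \<bar>t\<bar> \<le> norm x \<Longrightarrow> (p0 has_real_derivative p1 t) (at t)"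
      "\<And>t. \<bar>t\<bar> \<le> norm x \<Longrightarrow> (p1 has_real_derivative p2 t) (at t)"
      "\<And>t. \<bar>t\<bar> \<le> norm x \<Longrightarrow> (p2 has_real_derivative p3 t) (at t)"
    and q_deriv: "\<And>t. \<bar>t\<bar> \<le> norm x \<Longrightarrow> (q0 has_real_derivative q1 t) (at t)"
      "\<And>t. \<bar>t\<bar> \<le> norm x \<Longrightarrow> (q1 has_real_derivative q2 t) (at t)"
      "\<And>t. \<bar>t\<bar> \<le> norm x \<Longrightarrow> (q2 has_real_derivative q3 t) (at t)"
begin

lemmas has_derivative_f =
  has_derivative_hom1[where f=f0 and f'=f1, OF _ f_deriv(1)[OF s_of_bound]]
  has_derivative_hom1_d1[where f=f0 and f'=f1 and f''=f2, OF _ f_deriv[OF s_of_bound]]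

lemmas has_derivative_p =
  has_derivative_hom1[where f=p0 and f'=p1, OF _ p_deriv(1)[OF s_of_bound]]
  has_derivative_hom1_d1[where f=p0 and f'=p1 and f''=p2, OF _ p_deriv(1,2)[OF s_of_bound]]
  has_derivative_hom1_d2[where f=p0 and f'=p1 and f''=p2 and f'''=p3, OF _ p_deriv[OF s_of_bound]]

lemmas has_derivative_q =
  has_derivative_hom2[where q=q0 and q'=q1, OF _ q_deriv(1)[OF s_of_bound]]
  has_derivative_hom2_d1[where q=q0 and q'=q1 and q''=q2, OF _ q_deriv(1,2)[OF s_of_bound]]
  has_derivative_hom2_d2[where q=q0 and q'=q1 and q''=q2 and q'''=q3, OF _ q_deriv[OF s_of_bound]]

definition A_of :: "real \<Rightarrow> real" where
  "A_of \<sigma> = f0 \<sigma> - \<sigma> * f1 \<sigma>"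

definition D_of :: "real \<Rightarrow> real" where
  "D_of \<sigma> = A_of \<sigma> + B_of \<sigma> * f2 \<sigma>"

definition fund_form :: "real^'n \<Rightarrow> real^'n \<Rightarrow> real^'n \<Rightarrow> real" where
  "fund_form y v w = hom1_d1 f0 f1 y v * hom1_d1 f0 f1 y w + norm y * f0 (s_of y) * hom1_d2 f0 f1 f2 y v w"

lemma pd_F:
  assumes y: "y \<noteq> 0"
  shows "pd (\<lambda>y. F x y) l y = hom1_d1 f0 f1 y (axis l 1)"
  by (rule pd_eq_has_derivative) (simp add: F_eq has_derivative_f(1)[OF y])

lemma pd_F_sq:
  assumes y: "y \<noteq> 0"
  shows "pd (\<lambda>y. (F x y)\<^sup>2) l y = 2 * (norm y * f0 (s_of y)) * hom1_d1 f0 f1 y (axis l 1)"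
proof -
  have "((\<lambda>y. (norm y * f0 (s_of y)) * (norm y * f0 (s_of y))) has_derivative
      (\<lambda>w. 2 * (norm y * f0 (s_of y)) * hom1_d1 f0 f1 y w)) (at y)"
    by (rule has_derivative_eq_rhs[OF has_derivative_mult[OF has_derivative_f(1)[OF y]
          has_derivative_f(1)[OF y]]]) (simp add: fun_eq_iff)
  then show ?thesis by (intro pd_eq_has_derivative) (simp add: F_eq power2_eq_square)
qed

lemma fund_tensor_eq:
  assumes y: "y \<noteq> 0"
  shows "fund_tensor F x y i j = fund_form y (axis i 1) (axis j 1)"
proof -
  have "((\<lambda>y. 2 * (norm y * f0 (s_of y)) * hom1_d1 f0 f1 y (axis j 1)) has_derivative
      (\<lambda>v. 2 * fund_form y v (axis j 1))) (at y)"
    by (rule has_derivative_eq_rhs[OF has_derivative_mult[OF has_derivative_mult[OF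
          has_derivative_const has_derivative_f(1)[OF y]] has_derivative_f(2)[OF y]]])
       (simp add: fun_eq_iff fund_form_def algebra_simps)
  from pd_eq_has_derivative_on_open[OF open_nonzero _ _ this] y pd_F_sq
  show ?thesis unfolding fund_tensor_def by simp
qed

lemma fund_form_eq:
  assumes y: "y \<noteq> 0"
  shows "fund_form y v w = hom1_d1 f0 f1 y v * hom1_d1 f0 f1 y w
    + f0 (s_of y) * (A_of (s_of y) * ang y v w + f2 (s_of y) * hor y v * hor y w)"
  using y by (simp add: fund_form_def hom1_d2_def A_of_def)

lemma fund_tensor_quadratic_form:
  assumes y: "y \<noteq> 0"
  shows "(\<Sum>i\<in>UNIV. \<Sum>j\<in>UNIV. fund_tensor F x y i j * v $ i * v $ j) = fund_form y v v"
proof -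
  have "bilinear (fund_form y)"
    by (simp add: bilinear_def fund_form_eq[OF y] linear_iff hom1_d1_def hor_add hor_scaleR ang_def
        hat_add hat_scaleR inner_add_left inner_add_right algebra_simps)
  then show ?thesis
    by (simp add: bilinear_eq_sum_axis[of _ v v] fund_tensor_eq[OF y] algebra_simps)
qed

lemma gmat_eq:
  assumes y: "y \<noteq> 0"
  shows "gmat F x y = dyad_mat (yhat y) (xhor y) (f0 (s_of y) * A_of (s_of y))
    (s_of y * f0 (s_of y) * f1 (s_of y)) (f0 (s_of y) * f1 (s_of y)) (f0 (s_of y) * f1 (s_of y))
    ((f1 (s_of y))\<^sup>2 + f0 (s_of y) * f2 (s_of y))"
  using y by (simp add: vec_eq_iff gmat_def fund_tensor_eq fund_form_def hom1_d1_def hom1_d2_def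
      hat_axis hor_axis ang_def inner_axis_axis dyad_mat_def A_of_def field_simps power2_eq_square)

lemma ginv_eq:
  assumes y: "y \<noteq> 0"
    and nz: "f0 (s_of y) \<noteq> 0" "A_of (s_of y) \<noteq> 0" "D_of (s_of y) \<noteq> 0"
  shows "matrix_inv (gmat F x y) = dyad_mat (yhat y) (xhor y) (1 / (f0 (s_of y) * A_of (s_of y)))
    (- s_of y * f1 (s_of y) / ((f0 (s_of y))\<^sup>2 * A_of (s_of y))
      + B_of (s_of y) * (f1 (s_of y))\<^sup>2 / ((f0 (s_of y)) ^ 3 * D_of (s_of y)))
    (- f1 (s_of y) / ((f0 (s_of y))\<^sup>2 * D_of (s_of y))) (- f1 (s_of y) / ((f0 (s_of y))\<^sup>2 * D_of (s_of y)))
    (- f2 (s_of y) / (f0 (s_of y) * A_of (s_of y) * D_of (s_of y)))"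
  unfolding gmat_eq[OF y]
  by (rule matrix_inv_unique, unfold dyad_mat_mult inner_yhat_yhat[OF y] inner_yhat_xhor[OF y]
      inner_xhor_xhor[OF y], rule dyad_mat_eq_mat_1I)
     (use nz in \<open>simp_all add: field_simps power2_eq_square power3_eq_cube,
        simp_all add: D_of_def A_of_def algebra_simps\<close>)

definition spray1 :: "real^'n \<Rightarrow> real^'n \<Rightarrow> real^'n" where
  "spray1 y w = hom1_d1 p0 p1 y w *\<^sub>R y + (norm y * p0 (s_of y)) *\<^sub>R w + hom2_d1 q0 q1 y w *\<^sub>R x"

definition spray2 :: "real^'n \<Rightarrow> real^'n \<Rightarrow> real^'n \<Rightarrow> real^'n" where
  "spray2 y v w = hom1_d2 p0 p1 p2 y v w *\<^sub>R y + hom1_d1 p0 p1 y w *\<^sub>R v + hom1_d1 p0 p1 y v *\<^sub>R w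
     + hom2_d2 q0 q1 q2 y v w *\<^sub>R x"

definition spray3 :: "real^'n \<Rightarrow> real^'n \<Rightarrow> real^'n \<Rightarrow> real^'n \<Rightarrow> real^'n" where
  "spray3 y t v w = hom1_d3 p0 p1 p2 p3 y t v w *\<^sub>R y + hom1_d2 p0 p1 p2 y v w *\<^sub>R t
     + hom1_d2 p0 p1 p2 y t w *\<^sub>R v + hom1_d2 p0 p1 p2 y t v *\<^sub>R w + hom2_d3 q1 q2 q3 y t v w *\<^sub>R x"

context
  fixes y :: "real^'n"
  assumes y: "y \<noteq> 0"
begin

lemma has_derivative_spray:
  "((\<lambda>y. (norm y * p0 (s_of y)) *\<^sub>R y + ((norm y)\<^sup>2 * q0 (s_of y)) *\<^sub>R x) has_derivative spray1 y) (at y)"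
  by (rule has_derivative_eq_rhs,
      (rule has_derivative_p[OF y] has_derivative_q[OF y] derivative_eq_intros refl)+)
     (simp add: fun_eq_iff spray1_def)

lemma has_derivative_spray1: "((\<lambda>y. spray1 y w) has_derivative (\<lambda>v. spray2 y v w)) (at y)"
  unfolding spray1_def
  by (rule has_derivative_eq_rhs,
      (rule has_derivative_p[OF y] has_derivative_q[OF y] derivative_eq_intros refl)+)
     (simp add: fun_eq_iff spray2_def algebra_simps)

lemma has_derivative_spray2: "((\<lambda>y. spray2 y v w) has_derivative (\<lambda>t. spray3 y t v w)) (at y)"
  unfolding spray2_def
  by (rule has_derivative_eq_rhs,
      (rule has_derivative_p[OF y] has_derivative_q[OF y] derivative_eq_intros refl)+)
     (simp add: fun_eq_iff spray3_def algebra_simps)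

end

lemma pd_spray:
  assumes y: "y \<noteq> 0"
  shows "pd (\<lambda>y. spray F x y l) k y = spray1 y (axis k 1) $ l"
  by (rule pd_eq_has_derivative_on_open[OF open_nonzero _ _ has_derivative_vec_nth[OF has_derivative_spray[OF y]]])
     (simp_all add: y spray_eq)

lemma pd_pd_spray:
  assumes y: "y \<noteq> 0"
  shows "pd (\<lambda>y. pd (\<lambda>y. spray F x y l) k y) j y = spray2 y (axis j 1) (axis k 1) $ l"
  using pd_eq_has_derivative_on_open[OF open_nonzero _ _ has_derivative_vec_nth[OF has_derivative_spray1[OF y]]]
    y pd_spray by simp

lemma pd_pd_pd_spray:
  assumes y: "y \<noteq> 0"
  shows "pd (\<lambda>y. pd (\<lambda>y. pd (\<lambda>y. spray F x y l) k y) j y) i y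
    = spray3 y (axis i 1) (axis j 1) (axis k 1) $ l"
  using pd_eq_has_derivative_on_open[OF open_nonzero _ _ has_derivative_vec_nth[OF has_derivative_spray2[OF y]]]
    y pd_pd_spray by simp

definition L1_of :: "real \<Rightarrow> real" where
  "L1_of \<sigma> = 3 * f1 \<sigma> * p2 \<sigma> + f0 \<sigma> * p3 \<sigma> + (\<sigma> * f0 \<sigma> + B_of \<sigma> * f1 \<sigma>) * q3 \<sigma>"

definition L2_of :: "real \<Rightarrow> real" where
  "L2_of \<sigma> = - \<sigma> * f0 \<sigma> * p2 \<sigma> + f1 \<sigma> * (p0 \<sigma> - \<sigma> * p1 \<sigma>)
     + (\<sigma> * f0 \<sigma> + B_of \<sigma> * f1 \<sigma>) * (q1 \<sigma> - \<sigma> * q2 \<sigma>)"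

definition landsberg_form :: "real^'n \<Rightarrow> real^'n \<Rightarrow> real^'n \<Rightarrow> real^'n \<Rightarrow> real" where
  "landsberg_form y t v w = L1_of (s_of y) * hor y t * hor y v * hor y w
     + L2_of (s_of y) * (hor y t * ang y v w + hor y v * ang y t w + hor y w * ang y t v)"

(* Since hat y y = |y| and hor y y = 0, applying F_y = hom1_d1 f0 f1 y to spray3 turns the
   y-component into f0 |y| hom1_d3; its hat-terms cancel against those of the three
   hom1_d2-components. *)
lemma hom1_d1_spray3:
  assumes y: "y \<noteq> 0"
  shows "hom1_d1 f0 f1 y (spray3 y t v w) = landsberg_form y t v w / norm y"
proof -
  have "hom1_d1 f0 f1 y (spray3 y t v w)
    = f0 (s_of y) * norm y * hom1_d3 p0 p1 p2 p3 y t v w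
      + hom1_d2 p0 p1 p2 y v w * hom1_d1 f0 f1 y t + hom1_d2 p0 p1 p2 y t w * hom1_d1 f0 f1 y v
      + hom1_d2 p0 p1 p2 y t v * hom1_d1 f0 f1 y w
      + (s_of y * f0 (s_of y) + B_of (s_of y) * f1 (s_of y)) * hom2_d3 q1 q2 q3 y t v w"
    by (simp add: spray3_def hom1_d1_def hat_add hat_scaleR hor_add hor_scaleR
        hat_self[OF y] hor_self[OF y] hat_x[OF y] hor_x[OF y] algebra_simps)
  also have "\<dots> = landsberg_form y t v w / norm y"
    using y by (simp add: hom1_d1_def hom1_d2_def hom1_d3_def hom2_d3_def landsberg_form_def
        L1_of_def L2_of_def field_simps power2_eq_square)
  finally show ?thesis .
qed

lemma landsberg_eq:
  assumes y: "y \<noteq> 0"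
  shows "landsberg F x y i j k = - f0 (s_of y) / 2 * landsberg_form y (axis i 1) (axis j 1) (axis k 1)"
proof -
  have "(\<Sum>l\<in>UNIV. pd (\<lambda>y. F x y) l y * spray3 y (axis i 1) (axis j 1) (axis k 1) $ l)
      = hom1_d1 f0 f1 y (spray3 y (axis i 1) (axis j 1) (axis k 1))"
    unfolding linear_eq_sum_axis[OF linear_hom1_d1, of f0 f1 y "spray3 y _ _ _"]
    by (simp add: pd_F[OF y] mult.commute)
  then show ?thesis
    using y by (simp add: landsberg_def pd_pd_pd_spray hom1_d1_spray3 F_eq)
qed

lemma bilinear_landsberg_form: "bilinear (landsberg_form y t)"
  by (simp add: bilinear_def landsberg_form_def linear_iff hor_add hor_scaleR ang_def hat_add hat_scaleR
      inner_add_left inner_add_right algebra_simps)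

lemma landsberg_form_yhat:
  assumes y: "y \<noteq> 0"
  shows "landsberg_form y t (yhat y) w = 0" "landsberg_form y t v (yhat y) = 0"
  by (simp_all add: landsberg_form_def hor_yhat[OF y] ang_yhat[OF y])

lemma landsberg_form_xhor:
  assumes y: "y \<noteq> 0"
  shows "landsberg_form y t (xhor y) (xhor y)
    = hor y t * B_of (s_of y) * (B_of (s_of y) * L1_of (s_of y) + 3 * L2_of (s_of y))"
  using ang_xhor[OF y, of "xhor y"]
  by (simp add: landsberg_form_def hor_xhor[OF y] ang_xhor[OF y] ang_commute[of y _ t] algebra_simps)

lemma landsberg_form_trace:
  assumes y: "y \<noteq> 0"
  shows "(\<Sum>j\<in>UNIV. landsberg_form y t (axis j 1) (axis j 1))
    = hor y t * (B_of (s_of y) * L1_of (s_of y) + (real CARD('n) + 1) * L2_of (s_of y))"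
proof -
  have "(\<Sum>j\<in>UNIV. landsberg_form y t (axis j 1) (axis j 1))
    = L1_of (s_of y) * hor y t * (\<Sum>j\<in>UNIV. hor y (axis j 1) * hor y (axis j 1))
      + L2_of (s_of y) * (hor y t * (\<Sum>j\<in>UNIV. ang y (axis j 1) (axis j 1))
      + 2 * (\<Sum>j\<in>UNIV. hor y (axis j 1) * ang y t (axis j 1)))"
    by (simp add: landsberg_form_def sum.distrib sum_distrib_left algebra_simps ang_commute[of y _ t])
  also have "\<dots> = hor y t * (B_of (s_of y) * L1_of (s_of y) + (real CARD('n) + 1) * L2_of (s_of y))"
    by (simp only: sum_hor_hor[OF y] sum_ang_axis[OF y] sum_hor_ang[OF y]) (simp add: algebra_simps)
  finally show ?thesis .
qed

definition H_of :: "real \<Rightarrow> real" where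
  "H_of \<sigma> = - (B_of \<sigma> * A_of \<sigma> * L1_of \<sigma>
       + ((real CARD('n) + 1) * A_of \<sigma> + (real CARD('n) - 2) * B_of \<sigma> * f2 \<sigma>) * L2_of \<sigma>)
     / (2 * A_of \<sigma> * D_of \<sigma>)"

lemma mean_landsberg_eq_of_nonzero:
  assumes y: "y \<noteq> 0"
    and nz: "f0 (s_of y) \<noteq> 0" "A_of (s_of y) \<noteq> 0" "D_of (s_of y) \<noteq> 0"
  shows "mean_landsberg F x y i = H_of (s_of y) * hor y (axis i 1)"
proof -
  let ?c = "1 / (f0 (s_of y) * A_of (s_of y))"
    and ?k = "- f2 (s_of y) / (f0 (s_of y) * A_of (s_of y) * D_of (s_of y))"
    and ?L = "landsberg_form y (axis i 1)"
  have "mean_landsberg F x y i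
      = - f0 (s_of y) / 2 * (\<Sum>j\<in>UNIV. \<Sum>k\<in>UNIV. ginv F x y j k * ?L (axis j 1) (axis k 1))"
    by (simp add: mean_landsberg_def landsberg_eq[OF y] sum_distrib_left algebra_simps)
  also have "\<dots> = - f0 (s_of y) / 2 * (?c * (\<Sum>j\<in>UNIV. ?L (axis j 1) (axis j 1)) + ?k * ?L (xhor y) (xhor y))"
    by (simp add: ginv_def ginv_eq[OF y nz] dyad_mat_contract[OF bilinear_landsberg_form]
        landsberg_form_yhat[OF y])
  also have "\<dots> = H_of (s_of y) * hor y (axis i 1)"
    using nz by (simp add: landsberg_form_trace[OF y] landsberg_form_xhor[OF y] H_of_def field_simps)
      (simp add: D_of_def algebra_simps)
  finally show ?thesis .
qed

end

section \<open>Positivity from the Finsler conditions\<close>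

locale sph_finsler_at = sph_metric_at x F f0 f1 f2 p0 p1 p2 p3 q0 q1 q2 q3
  for x :: "real^'n" and F f0 f1 f2 p0 p1 p2 p3 q0 q1 q2 q3 +
  assumes F_pos: "\<And>y. y \<noteq> 0 \<Longrightarrow> F x y > 0"
    and fund_pos: "\<And>y v. y \<noteq> 0 \<Longrightarrow> v \<noteq> 0 \<Longrightarrow>
      (\<Sum>i\<in>UNIV. \<Sum>j\<in>UNIV. fund_tensor F x y i j * v $ i * v $ j) > 0"
begin

lemma fund_form_pos: "y \<noteq> 0 \<Longrightarrow> v \<noteq> 0 \<Longrightarrow> fund_form y v v > 0"
  using fund_pos by (simp add: fund_tensor_quadratic_form)

lemma f0_s_of_pos: "y \<noteq> 0 \<Longrightarrow> f0 (s_of y) > 0"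
  using F_pos[of y] by (simp add: F_eq zero_less_mult_iff)

lemma f0_A_of_pos:
  assumes y: "y \<noteq> 0" and z: "z \<noteq> 0" "x \<bullet> z = 0" "y \<bullet> z = 0"
  shows "f0 (s_of y) * A_of (s_of y) > 0"
proof -
  have "hat y z = 0" "hor y z = 0" using z by (simp_all add: hat_eq hor_eq)
  then have "fund_form y z z = f0 (s_of y) * A_of (s_of y) * (z \<bullet> z)"
    by (simp add: fund_form_eq[OF y] hom1_d1_def ang_def)
  with fund_form_pos[OF y z(1)] have "0 < f0 (s_of y) * A_of (s_of y) * (z \<bullet> z)" by simp
  moreover have "z \<bullet> z > 0" using z(1) by simp
  ultimately show ?thesis by (rule zero_less_mult_pos2)
qed

(* w is the vector of span {yhat, xhor} in the kernel of F_y, on which the fundamental form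
   reduces to f0 (A ang + f2 hor^2). *)
lemma D_of_pos:
  assumes y: "y \<noteq> 0" and B: "B_of (s_of y) > 0"
  shows "D_of (s_of y) > 0"
proof -
  let ?s = "s_of y"
  define w where "w = xhor y - (f1 ?s * B_of ?s / f0 ?s) *\<^sub>R yhat y"
  have f0: "f0 ?s > 0" by (rule f0_s_of_pos[OF y])
  have hat_w: "hat y w = - f1 ?s * B_of ?s / f0 ?s" and hor_w: "hor y w = B_of ?s"
    by (simp_all add: w_def hat_def hor_def inner_diff_right inner_yhat_yhat[OF y]
        inner_yhat_xhor[OF y] inner_xhor_xhor[OF y] inner_commute[of "xhor y" "yhat y"])
  have "w \<bullet> w = B_of ?s + (f1 ?s * B_of ?s / f0 ?s)\<^sup>2"
    by (simp add: w_def inner_diff_left inner_diff_right inner_yhat_yhat[OF y]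
        inner_yhat_xhor[OF y] inner_xhor_xhor[OF y] inner_commute[of "xhor y" "yhat y"]
        power2_eq_square algebra_simps)
  then have "fund_form y w w = f0 ?s * B_of ?s * D_of ?s"
    using f0 by (simp add: fund_form_eq[OF y] hom1_d1_def hat_w hor_w ang_def D_of_def
        power2_eq_square field_simps)
  moreover have "w \<noteq> 0" using hor_w B by (auto simp: hor_def)
  then have "fund_form y w w > 0" by (rule fund_form_pos[OF y])
  ultimately have "0 < (f0 ?s * B_of ?s) * D_of ?s" by simp
  then show ?thesis by (rule zero_less_mult_pos) (use f0 B in simp)
qed

(* Inside the interval A > 0 follows from D > 0 by tangent_intercept_pos; at the end points y is
   parallel to x and any z orthogonal to x is admissible in f0_A_of_pos. *)
lemma profile_pos:
  assumes n: "CARD('n) \<ge> 2" and \<tau>: "\<bar>\<tau>\<bar> \<le> norm x"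
  shows "f0 \<tau> > 0" "A_of \<tau> > 0" "D_of \<tau> > 0"
proof -
  have f0: "f0 t > 0" if "\<bar>t\<bar> \<le> norm x" for t
    using s_of_surj[OF n that] f0_s_of_pos by metis
  have B: "B_of t > 0" if "\<bar>t\<bar> < norm x" for t
    using power_strict_mono[OF that abs_ge_zero, of 2] by (simp add: B_of_def)
  have D: "D_of t > 0" if "\<bar>t\<bar> < norm x" for t
    using s_of_surj[OF n less_imp_le[OF that]] D_of_pos B[OF that] by metis
  show A: "A_of \<tau> > 0"
  proof (cases "\<bar>\<tau>\<bar> < norm x")
    case True
    show ?thesis unfolding A_of_def
      by (rule tangent_intercept_pos[OF f_deriv _ True])
         (use D in \<open>simp_all add: D_of_def A_of_def B_of_def\<close>)
  next
    case False
    show ?thesis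
    proof (cases "\<tau> = 0")
      case True
      then show ?thesis using f0[OF \<tau>] by (simp add: A_of_def)
    next
      case \<tau>0: False
      with False \<tau> have x0: "x \<noteq> 0" and norm_x: "norm x = \<bar>\<tau>\<bar>" by auto
      from n have "2 \<le> DIM(real^'n)" by simp
      from orthogonal_to_vector_exists[OF this, of x]
      obtain z where z: "z \<noteq> 0" "x \<bullet> z = 0" by (auto simp: orthogonal_def)
      have "\<tau> *\<^sub>R x \<noteq> 0" and "(\<tau> *\<^sub>R x) \<bullet> z = 0" using \<tau>0 x0 z by simp_all
      moreover have "s_of (\<tau> *\<^sub>R x) = \<tau>"
        using \<tau>0 norm_x by (simp add: s_of_def dot_square_norm power2_eq_square)
      ultimately have "f0 \<tau> * A_of \<tau> > 0" using f0_A_of_pos z by metis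
      then show ?thesis using f0[OF \<tau>] by (simp add: zero_less_mult_iff)
    qed
  qed
  show "f0 \<tau> > 0" by (rule f0[OF \<tau>])
  show "D_of \<tau> > 0"
  proof (cases "\<bar>\<tau>\<bar> < norm x")
    case False
    with \<tau> have "\<bar>\<tau>\<bar> = norm x" by simp
    then have "B_of \<tau> = 0" by (metis B_of_def power2_abs diff_self)
    then show ?thesis using A by (simp add: D_of_def)
  qed (rule D)
qed

lemma mean_landsberg_eq:
  assumes y: "y \<noteq> 0"
  shows "mean_landsberg F x y i = H_of (s_of y) * hor y (axis i 1)"
proof (cases "CARD('n) = 1")
  case True
  then have hor: "hor y w = 0" for w by (simp add: hor_def xhor_eq_0_if_card_1[OF _ y])
  then have "landsberg F x y i j k = 0" for j k by (simp add: landsberg_eq[OF y] landsberg_form_def)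
  then show ?thesis by (simp add: mean_landsberg_def hor)
next
  case False
  then have "CARD('n) \<ge> 2" using zero_less_card_finite[where 'a='n] by linarith
  from profile_pos[OF this s_of_bound[of y]] show ?thesis
    by (intro mean_landsberg_eq_of_nonzero[OF y]) auto
qed

end

theorem corollary3:
  fixes U :: "(real^'n) set" and D :: "(real \<times> real) set"
    and \<phi> P Q :: "real \<Rightarrow> real \<Rightarrow> real"
  assumes U_domain: "open U" "connected U" "U \<noteq> {}"
    and D_open: "open D"
    and D_contains: "\<forall>x\<in>U. \<forall>s. \<bar>s\<bar> \<le> norm x \<longrightarrow> (norm x, s) \<in> D"
    and phi_smooth: "smooth_on D (\<lambda>(r, s). \<phi> r s)"
    and P_smooth: "smooth_on D (\<lambda>(r, s). P r s)"
    and Q_smooth: "smooth_on D (\<lambda>(r, s). Q r s)"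
    and finsler: "finsler_metric U (sph_metric \<phi>)"
    and spray_PQ: "\<forall>x\<in>U. \<forall>y. y \<noteq> 0 \<longrightarrow> (\<forall>i.
        spray (sph_metric \<phi>) x y i
          = norm y * P (norm x) ((x \<bullet> y) / norm y) * y$i
            + (norm y)^2 * Q (norm x) ((x \<bullet> y) / norm y) * x$i)"
  shows "\<forall>x\<in>U. \<forall>y. y \<noteq> 0 \<longrightarrow> (\<forall>i.
        mean_landsberg (sph_metric \<phi>) x y i
          = Hcoef CARD('n) \<phi> P Q (norm x) ((x \<bullet> y) / norm y)
            * (x$i - ((x \<bullet> y) / norm y) * y$i / norm y))"
proof (intro ballI allI impI)
  fix x y :: "real^'n" and i :: 'n
  assume x: "x \<in> U" and y: "y \<noteq> 0"
  have inD: "(norm x, t) \<in> D" if "\<bar>t\<bar> \<le> norm x" for t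
    using D_contains x that by blast
  interpret sph_finsler_at x "sph_metric \<phi>"
    "\<phi> (norm x)" "ds \<phi> (norm x)" "ds (ds \<phi>) (norm x)"
    "P (norm x)" "ds P (norm x)" "ds (ds P) (norm x)" "ds (ds (ds P)) (norm x)"
    "Q (norm x)" "ds Q (norm x)" "ds (ds Q) (norm x)" "ds (ds (ds Q)) (norm x)"
    using finsler x spray_PQ smooth_on_has_real_derivative_ds[OF _ inD] phi_smooth P_smooth Q_smooth
    by unfold_locales (auto simp: finsler_metric_def sph_metric_def sph_frame.s_of_def)
  show "mean_landsberg (sph_metric \<phi>) x y i = Hcoef CARD('n) \<phi> P Q (norm x) ((x \<bullet> y) / norm y)
      * (x $ i - ((x \<bullet> y) / norm y) * y $ i / norm y)"
    using mean_landsberg_eq[OF y, of i]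
    by (simp add: Hcoef_def L1_def L2_def H_of_def L1_of_def L2_of_def A_of_def D_of_def B_of_def
        hor_axis xhor_nth s_of_def)
qed

end
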